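(* Let $G$ be a finite group of order $n$, and $X\subseteq G$ a non-empty proper subset of size $m$. If $m>n-\frac12-\sqrt{n-\frac34}$, then $X$ is $2$-generic in $G$. Hence if $m<\frac12+\sqrt{n-\frac34}$, then $X$ is not $2$-large in $G$.
   Context: For $X\subseteq G$: $X$ is $k$-large in $G$ if the intersection of any $k$ left translates $g_1X\cap\dots\cap g_kX$ ($g_i\in G$) is non-empty; $X$ is $k$-generic in $G$ if there are $g_1,\dots,g_k\in G$ with $G=\bigcup_{i\le k}g_iX$. *)

theory Defs
  imports Complex_Main "HOL-Algebra.Coset"
begin

definition k_large :: "('a, 'b) monoid_scheme \<Rightarrow> nat \<Rightarrow> 'a set \<Rightarrow> bool" where
  "k_large G k X \<longleftrightarrow>
     (\<forall>g. (\<forall>i<k. g i \<in> carrier G) \<longrightarrow> (\<Inter>i\<in>{..<k}. g i <#\<^bsub>G\<^esub> X) \<noteq> {})"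

definition k_generic :: "('a, 'b) monoid_scheme \<Rightarrow> nat \<Rightarrow> 'a set \<Rightarrow> bool" where
  "k_generic G k X \<longleftrightarrow>
     (\<exists>g. (\<forall>i<k. g i \<in> carrier G) \<and> carrier G = (\<Union>i\<in>{..<k}. g i <#\<^bsub>G\<^esub> X))"

end

theory Submission
  imports Defs
begin

text \<open>If \<open>k\<^sup>2 - k + 1 < |G|\<close>, the at most \<open>k\<^sup>2 - k + 1\<close> quotients \<open>a b\<^sup>-\<^sup>1\<close> of a \<open>k\<close>-element
  set \<open>Y\<close> cannot exhaust \<open>G\<close>, and for any \<open>g\<close> outside them the translate \<open>g Y\<close> misses \<open>Y\<close>.
  Applied to \<open>X\<close> this shows that \<open>X\<close> is not 2-large; applied to the complement \<open>Y = G - X\<close>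
  it gives \<open>g Y \<inter> Y = {}\<close>, i.e. \<open>X \<union> g X = G\<close>. The bound \<open>k < 1/2 + sqrt (n - 3/4)\<close> is
  exactly \<open>k\<^sup>2 - k + 1 < n\<close>.\<close>

lemma mult_self_add_one_less_if_less_half_add_sqrt:
  fixes k n :: nat
  assumes "k \<ge> 1" and "real k < 1/2 + sqrt (real n - 3/4)"
  shows "k * k + 1 < n + k"
proof -
  have "sqrt (real n - 3/4) > 0"
    using assms by linarith
  then have n_pos: "real n - 3/4 > 0"
    by simp
  have "(real k - 1/2)\<^sup>2 < (sqrt (real n - 3/4))\<^sup>2"
    using assms by (intro power_strict_mono) auto
  also have "\<dots> = real n - 3/4"
    using n_pos by simp
  finally have "real k * real k + 1 < real n + real k"
    by (simp add: power2_eq_square algebra_simps)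
  then show ?thesis
    by (metis of_nat_add of_nat_less_iff of_nat_mult of_nat_1)
qed

lemma card_Times_Diff_Id:
  assumes "finite Y"
  shows "card (Y \<times> Y - Id) + card Y = card Y * card Y"
proof -
  have Id_on_eq: "Id_on Y = (\<lambda>y. (y, y)) ` Y"
    by auto
  then have "card (Id_on Y) = card Y"
    by (simp add: card_image inj_on_def)
  moreover have "card ((Y \<times> Y - Id) \<union> Id_on Y) = card (Y \<times> Y - Id) + card (Id_on Y)"
    using assms Id_on_eq by (intro card_Un_disjoint) auto
  moreover have "(Y \<times> Y - Id) \<union> Id_on Y = Y \<times> Y"
    by auto
  ultimately show ?thesis
    by (simp add: card_cartesian_product)
qed

lemma (in group) l_coset_Int_self_nonempty_imp_quotient:
  assumes "Y \<subseteq> carrier G" and "g \<in> carrier G" and "(g <# Y) \<inter> Y \<noteq> {}"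
  shows "g \<in> insert \<one> ((\<lambda>(a, b). a \<otimes> inv b) ` (Y \<times> Y - Id))"
proof -
  obtain b a where ab: "b \<in> Y" "a \<in> Y" "g \<otimes> b = a"
    using assms(3) unfolding l_coset_def by auto
  then have "g = a \<otimes> inv b"
    using assms(1,2) by (metis inv_solve_right subsetD)
  moreover have "a \<noteq> b \<or> g = \<one>"
    using ab assms(1,2) by (metis r_cancel_one' subsetD)
  ultimately show ?thesis
    using ab by auto
qed

lemma (in group) ex_l_coset_disjoint:
  assumes "finite (carrier G)" and "Y \<subseteq> carrier G"
    and "card Y * card Y + 1 < order G + card Y"
  shows "\<exists>g\<in>carrier G. (g <# Y) \<inter> Y = {}"
proof -
  let ?Q = "insert \<one> ((\<lambda>(a, b). a \<otimes> inv b) ` (Y \<times> Y - Id))"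
  have fin_Y: "finite Y"
    using assms(1,2) finite_subset by blast
  have "card ?Q \<le> Suc (card ((\<lambda>(a, b). a \<otimes> inv b) ` (Y \<times> Y - Id)))"
    using fin_Y by (simp add: card_insert_if)
  also have "\<dots> \<le> Suc (card (Y \<times> Y - Id))"
    using fin_Y by (simp add: card_image_le)
  finally have "card ?Q \<le> Suc (card (Y \<times> Y - Id))" .
  then have "card ?Q < card (carrier G)"
    using card_Times_Diff_Id[OF fin_Y] assms(3) unfolding order_def by linarith
  then obtain g where "g \<in> carrier G" "g \<notin> ?Q"
    by (metis card_mono fin_Y finite_Diff finite_cartesian_product finite_imageI
        finite_insert not_less subsetI)
  then show ?thesis
    using l_coset_Int_self_nonempty_imp_quotient[OF assms(2)] by blast
qed

lemma (in group) l_coset_carrier_Diff: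
  assumes "X \<subseteq> carrier G" and "g \<in> carrier G"
  shows "g <# (carrier G - X) = carrier G - (g <# X)"
proof
  show "g <# (carrier G - X) \<subseteq> carrier G - (g <# X)"
    using assms unfolding l_coset_def by (auto simp: subset_iff)
  show "carrier G - (g <# X) \<subseteq> g <# (carrier G - X)"
  proof
    fix z assume z: "z \<in> carrier G - (g <# X)"
    then have "z = g \<otimes> (inv g \<otimes> z)" and "inv g \<otimes> z \<in> carrier G - X"
      using assms(2) by (auto simp: m_assoc[symmetric] l_coset_def)
    then show "z \<in> g <# (carrier G - X)"
      unfolding l_coset_def by blast
  qed
qed

lemma (in group) k_generic_2I:
  assumes "X \<subseteq> carrier G" and "g \<in> carrier G" and "X \<union> (g <# X) = carrier G"
  shows "k_generic G 2 X"
  unfolding k_generic_def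
proof (intro exI conjI)
  let ?h = "\<lambda>i::nat. if i = 0 then \<one> else g"
  show "\<forall>i<2. ?h i \<in> carrier G"
    using assms(2) by simp
  have "{..<2::nat} = {0, 1}"
    by auto
  then show "carrier G = (\<Union>i\<in>{..<2}. ?h i <# X)"
    using assms lcos_mult_one by simp
qed

lemma (in group) not_k_large_2I:
  assumes "X \<subseteq> carrier G" and "g \<in> carrier G" and "(g <# X) \<inter> X = {}"
  shows "\<not> k_large G 2 X"
proof
  let ?h = "\<lambda>i::nat. if i = 0 then \<one> else g"
  assume "k_large G 2 X"
  then have "(\<Inter>i\<in>{..<2}. ?h i <# X) \<noteq> {}"
    using assms(2) unfolding k_large_def by simp
  moreover have "{..<2::nat} = {0, 1}"
    by auto
  ultimately show False
    using assms lcos_mult_one by auto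
qed

theorem theorem2p8:
  fixes G (structure) and X :: "'a set" and n m :: nat
  assumes "group G" and "finite (carrier G)" and "order G = n"
    and "X \<subseteq> carrier G" and "X \<noteq> {}" and "X \<noteq> carrier G" and "card X = m"
  shows "(real m > real n - 1/2 - sqrt (real n - 3/4) \<longrightarrow> k_generic G 2 X)
       \<and> (real m < 1/2 + sqrt (real n - 3/4) \<longrightarrow> \<not> k_large G 2 X)"
proof (intro conjI impI)
  interpret group G by fact
  let ?Y = "carrier G - X"
  have "card ?Y = n - m" and "m \<le> n"
    using assms card_mono unfolding order_def by (auto simp: card_Diff_subset finite_subset)
  moreover have "card ?Y \<ge> 1"
    using assms by (auto simp: Suc_le_eq card_gt_0_iff finite_subset)
  moreover assume "real m > real n - 1/2 - sqrt (real n - 3/4)"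
  ultimately have "card ?Y * card ?Y + 1 < order G + card ?Y"
    using assms(3) by (intro mult_self_add_one_less_if_less_half_add_sqrt) auto
  then obtain g where "g \<in> carrier G" "(g <# ?Y) \<inter> ?Y = {}"
    using ex_l_coset_disjoint assms(2) by blast
  moreover from this have "g <# X \<subseteq> carrier G"
    using assms(4) l_coset_subset_G by blast
  ultimately show "k_generic G 2 X"
    using assms(4) l_coset_carrier_Diff by (intro k_generic_2I) auto
next
  interpret group G by fact
  assume "real m < 1/2 + sqrt (real n - 3/4)"
  moreover have "m \<ge> 1"
    using assms by (auto simp: Suc_le_eq card_gt_0_iff finite_subset)
  ultimately have "card X * card X + 1 < order G + card X"
    using assms(3,7) mult_self_add_one_less_if_less_half_add_sqrt by blast
  then obtain g where "g \<in> carrier G" "(g <# X) \<inter> X = {}"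
    using ex_l_coset_disjoint assms(2,4) by blast
  then show "\<not> k_large G 2 X"
    using assms(4) by (rule not_k_large_2I[rotated])
qed

end
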